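(* Fix $\alpha>0$, $\gamma>0$, $\Sigma_\epsilon>0$, $\omega_1\in[0,1)$, $\omega_2\in[0,1]$. Let $$T(x)=\left(\frac{\omega_2}{x^2}+\frac{(1-\omega_2)\alpha^2\gamma^2\Sigma_\epsilon}{(1+\gamma-x)^2}\right)^{-1/2},\qquad f_y(x)=\left(\frac{\omega_1}{x^2}+\frac{(1-\omega_1)\gamma^2\alpha^2\Sigma_\epsilon}{(1+\gamma-y)^2}\right)^{-1/2}.$$ Suppose $(\lambda_{2,t})_{t\ge0}$, with $\lambda_{2,t+1}=T(\lambda_{2,t})$ and $\lambda_{2,t}\in[1,1+\gamma)$ for all $t$, is periodic of minimal period $p$. Then the forced dynamics $\lambda_{1,t+1}=f_{\lambda_{2,t}}(\lambda_{1,t})$ is periodic of the same period: there is a sequence $(x_t)_{t\ge0}$ of minimal period $p$ with $x_{t+1}=f_{\lambda_{2,t}}(x_t)$, and for every $\lambda_{1,0}\in[1,\infty)$ one has $|\lambda_{1,t}-x_t|\to0$ as $t\to\infty$.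
   Context: This is the case $\pi_1=0$ of the two-bank leverage model, in which the large bank (leverage $\lambda_2$, memory $\omega_2$) forces the small bank (leverage $\lambda_1$, memory $\omega_1$). *)

theory Defs
  imports Complex_Main
begin

definition Tmap :: "real \<Rightarrow> real \<Rightarrow> real \<Rightarrow> real \<Rightarrow> real \<Rightarrow> real" where
  "Tmap \<alpha> \<gamma> \<Sigma> \<omega>2 x =
     (\<omega>2 / x\<^sup>2 + (1 - \<omega>2) * \<alpha>\<^sup>2 * \<gamma>\<^sup>2 * \<Sigma> / (1 + \<gamma> - x)\<^sup>2) powr (-1/2)"

definition fmap :: "real \<Rightarrow> real \<Rightarrow> real \<Rightarrow> real \<Rightarrow> real \<Rightarrow> real \<Rightarrow> real" where
  "fmap \<alpha> \<gamma> \<Sigma> \<omega>1 y x =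
     (\<omega>1 / x\<^sup>2 + (1 - \<omega>1) * \<gamma>\<^sup>2 * \<alpha>\<^sup>2 * \<Sigma> / (1 + \<gamma> - y)\<^sup>2) powr (-1/2)"

definition minimal_period :: "(nat \<Rightarrow> 'a) \<Rightarrow> nat \<Rightarrow> bool" where
  "minimal_period s p \<longleftrightarrow> p > 0 \<and> (\<forall>t. s (t + p) = s t) \<and>
     (\<forall>q. 0 < q \<and> q < p \<longrightarrow> \<not> (\<forall>t. s (t + q) = s t))"

primrec forced_orbit :: "(real \<Rightarrow> real \<Rightarrow> real) \<Rightarrow> (nat \<Rightarrow> real) \<Rightarrow> real \<Rightarrow> nat \<Rightarrow> real" where
  "forced_orbit f lam2 l0 0 = l0"
| "forced_orbit f lam2 l0 (Suc t) = f (lam2 t) (forced_orbit f lam2 l0 t)"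

end

theory Submission
  imports Defs
begin

text \<open>In the variable \<open>u = 1/\<lambda>\<^sub>1\<^sup>2\<close> the map \<open>f\<^sub>y\<close> becomes the affine map
  \<open>u \<mapsto> \<omega>\<^sub>1 u + c(y)\<close> with \<open>c(y) = (1 - \<omega>\<^sub>1)\<gamma>\<^sup>2\<alpha>\<^sup>2\<Sigma>/(1 + \<gamma> - y)\<^sup>2\<close>.
  Forced by the \<open>p\<close>-periodic sequence \<open>\<lambda>\<^sub>2\<close>, this affine system contracts at rate \<open>\<omega>\<^sub>1 < 1\<close>:
  any two orbits differ by \<open>\<omega>\<^sub>1\<^sup>t\<close> times their initial difference, and solving for a start that
  returns after \<open>p\<close> steps gives a \<open>p\<close>-periodic orbit attracting all others. Since \<open>c\<close> is
  injective on \<open>(-\<infinity>, 1 + \<gamma>)\<close>, any period of that orbit is a period of \<open>\<lambda>\<^sub>2\<close>, so its minimal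
  period is exactly \<open>p\<close>. Orbits stay in \<open>u \<ge> (1 - \<omega>\<^sub>1)\<alpha>\<^sup>2\<Sigma>\<close>, where \<open>u \<mapsto> 1/\<surd>u\<close> is Lipschitz,
  so convergence transfers back to \<open>\<lambda>\<^sub>1\<close>. The map \<open>T\<close> enters only through the periodicity and
  the range of \<open>\<lambda>\<^sub>2\<close>.\<close>

lemma forced_orbit_invariant:
  assumes "P u0" and "\<And>t u. P u \<Longrightarrow> P (f (s t) u)"
  shows "P (forced_orbit f s u0 t)"
  by (induction t) (simp_all add: assms)

lemma forced_orbit_conj:
  assumes "\<And>t u. h (f (s t) u) = g (s t) (h u)"
  shows "h (forced_orbit f s u0 t) = forced_orbit g s (h u0) t"
  by (induction t) (simp_all add: assms)

lemma forced_orbit_periodic: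
  assumes "\<And>t. s (t + p) = s t" and "forced_orbit f s u0 p = u0"
  shows "forced_orbit f s u0 (t + p) = forced_orbit f s u0 t"
  by (induction t) (simp_all add: assms)

lemma forcing_periodic_if_forced_orbit_periodic:
  assumes inj: "\<And>t t' u. f (s t) u = f (s t') u \<Longrightarrow> s t = s t'"
    and per: "\<And>t. forced_orbit f s u0 (t + q) = forced_orbit f s u0 t"
  shows "s (t + q) = s t"
proof (rule inj)
  have "f (s (t + q)) (forced_orbit f s u0 (t + q)) = forced_orbit f s u0 (Suc t + q)" by simp
  also have "\<dots> = f (s t) (forced_orbit f s u0 t)" by (simp only: per) simp
  finally show "f (s (t + q)) (forced_orbit f s u0 t) = f (s t) (forced_orbit f s u0 t)"
    by (simp only: per)
qed

lemma minimal_period_transfer: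
  assumes "minimal_period s p" and "\<And>t. x (t + p) = x t"
    and "\<And>q. \<forall>t. x (t + q) = x t \<Longrightarrow> \<forall>t. s (t + q) = s t"
  shows "minimal_period x p"
  using assms unfolding minimal_period_def by blast

lemma affine_orbit_diff:
  "forced_orbit (\<lambda>y u. w * u + c y) s a t - forced_orbit (\<lambda>y u. w * u + c y) s b t
     = w ^ t * (a - b)"
proof (induction t)
  case (Suc t)
  have "forced_orbit (\<lambda>y u. w * u + c y) s a (Suc t) - forced_orbit (\<lambda>y u. w * u + c y) s b (Suc t)
      = w * (forced_orbit (\<lambda>y u. w * u + c y) s a t - forced_orbit (\<lambda>y u. w * u + c y) s b t)"
    by (simp add: algebra_simps)
  then show ?case
    using Suc.IH by simp
qed simp

lemma affine_orbit_returning_start: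
  fixes c :: "real \<Rightarrow> real" and s :: "nat \<Rightarrow> real"
  assumes "w ^ p \<noteq> 1"
  defines "a \<equiv> forced_orbit (\<lambda>y u. w * u + c y) s 0 p / (1 - w ^ p)"
  shows "forced_orbit (\<lambda>y u. w * u + c y) s a p = a"
proof -
  have "forced_orbit (\<lambda>y u. w * u + c y) s a p
      = w ^ p * a + forced_orbit (\<lambda>y u. w * u + c y) s 0 p"
    using affine_orbit_diff[of w c s a p 0] by simp
  then show ?thesis
    using assms by (simp add: field_simps)
qed

lemma affine_orbit_Suc_ge:
  assumes "0 \<le> w" and "0 \<le> a" and "\<And>y. 0 \<le> c y" and "m \<le> c (s t)"
  shows "m \<le> forced_orbit (\<lambda>y u. w * u + c y) s a (Suc t)"
proof -
  have "0 \<le> forced_orbit (\<lambda>y u. w * u + c y) s a t"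
    by (rule forced_orbit_invariant) (use assms in auto)
  then show ?thesis
    using assms by (simp add: add_increasing)
qed

lemma abs_inverse_sqrt_diff_le:
  fixes U V m :: real
  assumes "0 < m" and "m \<le> U" and "m \<le> V"
  shows "\<bar>1 / sqrt U - 1 / sqrt V\<bar> \<le> \<bar>U - V\<bar> / (m * sqrt m)"
proof -
  have sqrt_ge: "sqrt m \<le> sqrt U" "sqrt m \<le> sqrt V" and "0 < sqrt m"
    using assms by auto
  then have pos: "0 < sqrt U" "0 < sqrt V" by linarith+
  have "(sqrt V - sqrt U) * (sqrt U + sqrt V) = V - U"
    using assms by (simp add: algebra_simps)
  moreover have sum_pos: "0 < sqrt U + sqrt V"
    using pos by linarith
  ultimately have "sqrt V - sqrt U = (V - U) / (sqrt U + sqrt V)"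
    by (simp add: eq_divide_eq)
  moreover have "1 / sqrt U - 1 / sqrt V = (sqrt V - sqrt U) / (sqrt U * sqrt V)"
    using pos by (simp add: field_simps)
  ultimately have eq: "1 / sqrt U - 1 / sqrt V = (V - U) / (sqrt U * sqrt V * (sqrt U + sqrt V))"
    by simp
  have "m = sqrt m * sqrt m" using assms by simp
  also have "\<dots> \<le> sqrt U * sqrt V" using sqrt_ge \<open>0 < sqrt m\<close> by (intro mult_mono) auto
  finally have "m \<le> sqrt U * sqrt V" .
  moreover have "sqrt m \<le> sqrt U + sqrt V"
    using sqrt_ge pos by linarith
  ultimately have "m * sqrt m \<le> sqrt U * sqrt V * (sqrt U + sqrt V)"
    using \<open>0 < sqrt m\<close> assms by (intro mult_mono) auto
  then have "\<bar>U - V\<bar> / (sqrt U * sqrt V * (sqrt U + sqrt V)) \<le> \<bar>U - V\<bar> / (m * sqrt m)"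
    using assms \<open>0 < sqrt m\<close> pos sum_pos by (intro divide_left_mono) (auto intro!: mult_pos_pos)
  then show ?thesis
    using eq pos by (simp add: abs_minus_commute)
qed

lemma inverse_sqrt_diff_tendsto_zero:
  fixes U V :: "'a \<Rightarrow> real"
  assumes "0 < m" and "\<forall>\<^sub>F t in F. m \<le> U t \<and> m \<le> V t" and "((\<lambda>t. U t - V t) \<longlongrightarrow> 0) F"
  shows "((\<lambda>t. \<bar>1 / sqrt (U t) - 1 / sqrt (V t)\<bar>) \<longlongrightarrow> 0) F"
proof (rule tendsto_0_le[OF assms(3), where K = "1 / (m * sqrt m)"])
  show "\<forall>\<^sub>F t in F. norm \<bar>1 / sqrt (U t) - 1 / sqrt (V t)\<bar> \<le> norm (U t - V t) * (1 / (m * sqrt m))"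
    using assms(2) by eventually_elim (use abs_inverse_sqrt_diff_le assms(1) in auto)
qed

lemma inverse_square_powr_neg_half:
  "0 < (z::real) \<Longrightarrow> 1 / (z powr (-1/2))\<^sup>2 = z"
  by (simp add: powr_minus_divide powr_half_sqrt power_divide)

text \<open>At \<open>z = 0\<close> this holds through the convention \<open>1 / 0 = 0\<close>.\<close>
lemma inverse_sqrt_inverse_square: "0 \<le> (z::real) \<Longrightarrow> 1 / sqrt (1 / z\<^sup>2) = z"
  by (simp add: real_sqrt_divide)

locale small_bank =
  fixes \<alpha> \<gamma> \<Sigma> \<omega>1 :: real
  assumes \<alpha>_pos: "0 < \<alpha>" and \<gamma>_pos: "0 < \<gamma>" and \<Sigma>_pos: "0 < \<Sigma>"
    and \<omega>1_nonneg: "0 \<le> \<omega>1" and \<omega>1_less_1: "\<omega>1 < 1"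
begin

definition forcing :: "real \<Rightarrow> real" where
  "forcing y = (1 - \<omega>1) * \<gamma>\<^sup>2 * \<alpha>\<^sup>2 * \<Sigma> / (1 + \<gamma> - y)\<^sup>2"

abbreviation affine :: "real \<Rightarrow> real \<Rightarrow> real" where
  "affine y u \<equiv> \<omega>1 * u + forcing y"

lemma forcing_nonneg: "0 \<le> forcing y"
  using \<omega>1_less_1 \<Sigma>_pos by (simp add: forcing_def)

lemma forcing_pos: "y < 1 + \<gamma> \<Longrightarrow> 0 < forcing y"
  using \<omega>1_less_1 \<Sigma>_pos \<alpha>_pos \<gamma>_pos by (simp add: forcing_def)

lemma forcing_ge:
  assumes "1 \<le> y" and "y < 1 + \<gamma>"
  shows "(1 - \<omega>1) * \<alpha>\<^sup>2 * \<Sigma> \<le> forcing y"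
proof -
  have "(1 + \<gamma> - y)\<^sup>2 \<le> \<gamma>\<^sup>2"
    using assms by (intro power_mono) auto
  then have "(1 - \<omega>1) * \<gamma>\<^sup>2 * \<alpha>\<^sup>2 * \<Sigma> / \<gamma>\<^sup>2 \<le> forcing y"
    unfolding forcing_def using assms \<omega>1_less_1 \<Sigma>_pos \<alpha>_pos
    by (intro divide_left_mono) auto
  then show ?thesis
    using \<gamma>_pos by simp
qed

lemma forcing_inj:
  assumes "y < 1 + \<gamma>" and "y' < 1 + \<gamma>" and "forcing y = forcing y'"
  shows "y = y'"
proof -
  have "(1 - \<omega>1) * \<gamma>\<^sup>2 * \<alpha>\<^sup>2 * \<Sigma> \<noteq> 0"
    using \<omega>1_less_1 \<Sigma>_pos \<alpha>_pos \<gamma>_pos by simp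
  then have "(1 + \<gamma> - y)\<^sup>2 = (1 + \<gamma> - y')\<^sup>2"
    using assms(3) unfolding forcing_def by (simp add: divide_cancel_left)
  then show ?thesis
    using assms by (simp add: power2_eq_iff_nonneg)
qed

lemma inverse_square_fmap:
  "y < 1 + \<gamma> \<Longrightarrow> 1 / (fmap \<alpha> \<gamma> \<Sigma> \<omega>1 y x)\<^sup>2 = affine y (1 / x\<^sup>2)"
  using inverse_square_powr_neg_half[of "affine y (1 / x\<^sup>2)"] forcing_pos[of y] \<omega>1_nonneg
  by (simp add: fmap_def forcing_def add_nonneg_pos)

lemma fmap_forcing_inj:
  assumes "y < 1 + \<gamma>" and "y' < 1 + \<gamma>" and "fmap \<alpha> \<gamma> \<Sigma> \<omega>1 y u = fmap \<alpha> \<gamma> \<Sigma> \<omega>1 y' u"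
  shows "y = y'"
proof (rule forcing_inj[OF assms(1,2)])
  have "affine y (1 / u\<^sup>2) = affine y' (1 / u\<^sup>2)"
    using assms inverse_square_fmap by metis
  then show "forcing y = forcing y'"
    by simp
qed

lemma fmap_orbit_eq:
  assumes "\<forall>t. lam2 t < 1 + \<gamma>" and "0 \<le> l0"
  shows "forced_orbit (fmap \<alpha> \<gamma> \<Sigma> \<omega>1) lam2 l0 t
           = 1 / sqrt (forced_orbit affine lam2 (1 / l0\<^sup>2) t)"
proof -
  have "0 \<le> forced_orbit (fmap \<alpha> \<gamma> \<Sigma> \<omega>1) lam2 l0 t"
    by (rule forced_orbit_invariant) (use assms in \<open>simp_all add: fmap_def\<close>)
  moreover have "1 / (forced_orbit (fmap \<alpha> \<gamma> \<Sigma> \<omega>1) lam2 l0 t)\<^sup>2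
                   = forced_orbit affine lam2 (1 / l0\<^sup>2) t"
    by (rule forced_orbit_conj) (use assms inverse_square_fmap in auto)
  ultimately show ?thesis
    by (metis inverse_sqrt_inverse_square)
qed

lemma fmap_returning_start:
  assumes "\<forall>t. lam2 t < 1 + \<gamma>" and "0 < p"
  obtains x0 where "0 \<le> x0" and "forced_orbit (fmap \<alpha> \<gamma> \<Sigma> \<omega>1) lam2 x0 p = x0"
proof -
  define a where "a = forced_orbit affine lam2 0 p / (1 - \<omega>1 ^ p)"
  have "\<omega>1 ^ p < 1"
    using assms \<omega>1_nonneg \<omega>1_less_1 by (simp add: power_less_one_iff)
  then have a_ret: "forced_orbit affine lam2 a p = a"
    unfolding a_def by (intro affine_orbit_returning_start) simp
  have "0 \<le> forced_orbit affine lam2 0 p"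
    by (rule forced_orbit_invariant) (use \<omega>1_nonneg forcing_nonneg in auto)
  then have "0 \<le> a"
    unfolding a_def using \<open>\<omega>1 ^ p < 1\<close> by simp
  moreover from this have "1 / (1 / sqrt a)\<^sup>2 = a"
    by (simp add: power_divide)
  ultimately have "forced_orbit (fmap \<alpha> \<gamma> \<Sigma> \<omega>1) lam2 (1 / sqrt a) p = 1 / sqrt a"
    using a_ret fmap_orbit_eq[OF assms(1), of "1 / sqrt a"] by simp
  with \<open>0 \<le> a\<close> show ?thesis
    by (intro that) simp_all
qed

lemma fmap_orbits_synchronize:
  assumes range: "\<forall>t. 1 \<le> lam2 t \<and> lam2 t < 1 + \<gamma>" and "0 \<le> l0" and "0 \<le> l0'"
  shows "(\<lambda>t. \<bar>forced_orbit (fmap \<alpha> \<gamma> \<Sigma> \<omega>1) lam2 l0 t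
               - forced_orbit (fmap \<alpha> \<gamma> \<Sigma> \<omega>1) lam2 l0' t\<bar>) \<longlonglongrightarrow> 0"
proof -
  let ?U = "forced_orbit affine lam2 (1 / l0\<^sup>2)" and ?V = "forced_orbit affine lam2 (1 / l0'\<^sup>2)"
  define m where "m = (1 - \<omega>1) * \<alpha>\<^sup>2 * \<Sigma>"
  have "0 < m"
    unfolding m_def using \<omega>1_less_1 \<alpha>_pos \<Sigma>_pos by simp
  have Suc_ge: "m \<le> forced_orbit affine lam2 b (Suc t)" if "0 \<le> b" for b t
    unfolding m_def
    by (rule affine_orbit_Suc_ge) (use that range \<omega>1_nonneg forcing_nonneg forcing_ge in auto)
  have "\<forall>\<^sub>F t in sequentially. m \<le> ?U t \<and> m \<le> ?V t"
  proof (rule eventually_sequentiallyI)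
    fix t :: nat
    assume "1 \<le> t"
    then obtain k where "t = Suc k"
      by (cases t) auto
    then show "m \<le> ?U t \<and> m \<le> ?V t"
      using Suc_ge by simp
  qed
  moreover have "(\<lambda>t. ?U t - ?V t) \<longlonglongrightarrow> 0"
    unfolding affine_orbit_diff using \<omega>1_nonneg \<omega>1_less_1
    by (intro tendsto_mult_left_zero LIMSEQ_power_zero) auto
  ultimately have "(\<lambda>t. \<bar>1 / sqrt (?U t) - 1 / sqrt (?V t)\<bar>) \<longlonglongrightarrow> 0"
    by (rule inverse_sqrt_diff_tendsto_zero[OF \<open>0 < m\<close>])
  moreover have "\<forall>t. lam2 t < 1 + \<gamma>"
    using range by simp
  ultimately show ?thesis
    using assms(2,3) by (simp add: fmap_orbit_eq)
qed

end

theorem mainTheorem4: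
  fixes \<alpha> \<gamma> \<Sigma> \<omega>1 \<omega>2 :: real and lam2 :: "nat \<Rightarrow> real" and p :: nat
  assumes "\<alpha> > 0" and "\<gamma> > 0" and "\<Sigma> > 0"
    and "0 \<le> \<omega>1" and "\<omega>1 < 1" and "0 \<le> \<omega>2" and "\<omega>2 \<le> 1"
    and "\<forall>t. lam2 (Suc t) = Tmap \<alpha> \<gamma> \<Sigma> \<omega>2 (lam2 t)"
    and "\<forall>t. 1 \<le> lam2 t \<and> lam2 t < 1 + \<gamma>"
    and "minimal_period lam2 p"
  shows "\<exists>x :: nat \<Rightarrow> real. minimal_period x p
           \<and> (\<forall>t. x (Suc t) = fmap \<alpha> \<gamma> \<Sigma> \<omega>1 (lam2 t) (x t))
           \<and> (\<forall>l0 \<ge> 1. (\<lambda>t. \<bar>forced_orbit (fmap \<alpha> \<gamma> \<Sigma> \<omega>1) lam2 l0 t - x t\<bar>)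
                          \<longlonglongrightarrow> 0)"
proof -
  interpret small_bank \<alpha> \<gamma> \<Sigma> \<omega>1
    using assms by unfold_locales
  let ?f = "fmap \<alpha> \<gamma> \<Sigma> \<omega>1"
  have range: "\<forall>t. lam2 t < 1 + \<gamma>" and "0 < p" and lam2_per: "\<And>t. lam2 (t + p) = lam2 t"
    using assms(9,10) unfolding minimal_period_def by auto
  obtain x0 where "0 \<le> x0" and x0_ret: "forced_orbit ?f lam2 x0 p = x0"
    using fmap_returning_start[OF range \<open>0 < p\<close>] .
  define x where "x = forced_orbit ?f lam2 x0"
  have "minimal_period x p"
  proof (rule minimal_period_transfer[OF assms(10)])
    show "x (t + p) = x t" for t
      unfolding x_def using lam2_per x0_ret by (rule forced_orbit_periodic)
    show "\<forall>t. lam2 (t + q) = lam2 t" if "\<forall>t. x (t + q) = x t" for q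
      using that range fmap_forcing_inj unfolding x_def
      by (blast intro: forcing_periodic_if_forced_orbit_periodic)
  qed
  moreover have "\<forall>t. x (Suc t) = ?f (lam2 t) (x t)"
    unfolding x_def by simp
  moreover have "\<forall>l0 \<ge> 1. (\<lambda>t. \<bar>forced_orbit ?f lam2 l0 t - x t\<bar>) \<longlonglongrightarrow> 0"
    unfolding x_def using assms(9) \<open>0 \<le> x0\<close> by (auto intro: fmap_orbits_synchronize)
  ultimately show ?thesis
    by blast
qed

end
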